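(* Let $\mathcal{M}=(W,\leq,R,V)$ be an extended conditional intuitionistic model and define $\mathcal{M}^{n4}=(W,\leq,R^{n4},V^+,V^-)$ by $R^{n4}:=\{(w,(X,Y),v)\mid\exists u\,((w,X,u)\in R\ \&\ (u,Y,v)\in R)\}$, $V^+(p_i):=V(p_i)$, $V^-(p_i):=V(q_i)$. Then (1) $\mathcal{M}^{n4}$ is a Nelsonian conditional model, and (2) for every $w\in W$ and every $\phi\in\mathcal{L}_{\Box\!\!\rightarrow}$, $\mathcal{M}^{n4},w\models^+\phi$ iff $\mathcal{M},w\models^iE^\pm(\phi)$.
   Context: $\mathcal{L}_{\Box\!\!\rightarrow}$ is built from variables $p_0,p_1,\dots$ with $\wedge,\vee,\to$, strong negation $\sim$, and a binary would-conditional $\Box\!\!\rightarrow$. A Nelsonian conditional model is $(W,\leq,R,V^+,V^-)$ with $W\neq\emptyset$, $\leq$ a preorder, $V^\pm$ assigning upward-closed sets to variables, $R\subseteq W\times(\mathcal{P}(W)\times\mathcal{P}(W))\times W$ satisfying for all $X,Y$: (c1) $w\leq w'$ and $R_{(X,Y)}(w,v)$ imply $R_{(X,Y)}(w',v')$ for some $v'\geq v$; (c2) $R_{(X,Y)}(w,v)$ and $v\leq v'$ imply $R_{(X,Y)}(w',v')$ for some $w'\geq w$. Verification $\models^+$/falsification $\models^-$: atoms by $V^\pm$; $\wedge$ verified iff both verified, falsified iff one falsified; $\vee$ dually; $\sim$ swaps; $w\models^+\psi\to\chi$ iff for all $v\geq w$, $v\models^+\psi$ implies $v\models^+\chi$;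 $w\models^-\psi\to\chi$ iff $w\models^+\psi$ and $w\models^-\chi$; $w\models^+\psi\Box\!\!\rightarrow\chi$ iff for all $v\geq w$ and $u$ with $R_{\|\psi\|}(v,u)$, $u\models^+\chi$; $w\models^-\psi\Box\!\!\rightarrow\chi$ iff some $u$ has $R_{\|\psi\|}(w,u)$ and $u\models^-\chi$; $\|\psi\|=(\{w\mid w\models^+\psi\},\{w\mid w\models^-\psi\})$. The target language $\mathcal{L}^{e+}_{(\Box\!\!\rightarrow,\Diamond\!\!\rightarrow)}$ has variables $p_i$ and extra variables $q_i$, connectives $\wedge,\vee,\to$ and primitive binary $\Box\!\!\rightarrow$, $\Diamond\!\!\rightarrow$ (no negation). An extended conditional intuitionistic model is $(W,\leq,R,V)$ with $\leq$ a preorder, $V$ assigning upward-closed sets to all $p_i,q_i$, $R\subseteq W\times\mathcal{P}(W)\times W$ such that for all $X$: if $w\leq w'$ and $R_X(w,v)$ then $R_X(w',v')$ for some $v'\geq v$; if $R_X(w,v)$ and $v\leq v'$ then $R_X(w',v')$ for some $w'\geq w$. $\models^i$: atoms by $V$; $\wedge,\vee$ pointwise; $w\models^i\psi\to\chi$ iff for all $v\geq w$, $v\models^i\psi$ implies $v\models^i\chi$; $w\models^i\psi\Box\!\!\rightarrow\chi$ iff for all $v\geq w$ and $u$ with $R_{\|\psi\|^i}(v,u)$, $u\models^i\chi$; $w\models^i\psi\Diamond\!\!\rightarrow\chi$ iff some $u$ has $R_{\|\psi\|^i}(w,u)$ and $u\models^i\chi$; $\|\psi\|^i=\{w\mid w\models^i\psi\}$.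 The translation $E^\pm$: $E^\pm(p_i)=p_i$, $E^\pm(\sim p_i)=q_i$, $E^\pm(\phi\wedge\psi)=E^\pm(\phi)\wedge E^\pm(\psi)$, $E^\pm(\sim(\phi\wedge\psi))=E^\pm(\sim\phi)\vee E^\pm(\sim\psi)$, $E^\pm(\phi\vee\psi)=E^\pm(\phi)\vee E^\pm(\psi)$, $E^\pm(\sim(\phi\vee\psi))=E^\pm(\sim\phi)\wedge E^\pm(\sim\psi)$, $E^\pm(\sim\sim\phi)=E^\pm(\phi)$, $E^\pm(\phi\to\psi)=E^\pm(\phi)\to E^\pm(\psi)$, $E^\pm(\sim(\phi\to\psi))=E^\pm(\phi)\wedge E^\pm(\sim\psi)$, $E^\pm(\phi\Box\!\!\rightarrow\psi)=E^\pm(\phi)\Box\!\!\rightarrow(E^\pm(\sim\phi)\Box\!\!\rightarrow E^\pm(\psi))$, $E^\pm(\sim(\phi\Box\!\!\rightarrow\psi))=E^\pm(\phi)\Diamond\!\!\rightarrow(E^\pm(\sim\phi)\Diamond\!\!\rightarrow E^\pm(\sim\psi))$. *)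

theory Defs
  imports Main
begin

datatype fm =
    Var nat
  | Neg fm             (* strong negation ~ *)
  | Conj fm fm
  | Disj fm fm
  | Imp fm fm
  | Cond fm fm

datatype efm =
    PV nat
  | QV nat
  | EConj efm efm
  | EDisj efm efm
  | EImp efm efm
  | EBox efm efm
  | EDia efm efm

text \<open>A model is (W, le, R, Vp, Vq): Vp i = V(p_i), Vq i = V(q_i);
  R X w v means (w, X, v) \<in> R, i.e. R_X(w,v).\<close>

definition preorder_on :: "'w set \<Rightarrow> ('w \<Rightarrow> 'w \<Rightarrow> bool) \<Rightarrow> bool" where
  "preorder_on W le \<longleftrightarrow>
     (\<forall>w v. le w v \<longrightarrow> w \<in> W \<and> v \<in> W) \<and>
     (\<forall>w\<in>W. le w w) \<and>
     (\<forall>u v w. le u v \<longrightarrow> le v w \<longrightarrow> le u w)"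

definition up_closed :: "'w set \<Rightarrow> ('w \<Rightarrow> 'w \<Rightarrow> bool) \<Rightarrow> 'w set \<Rightarrow> bool" where
  "up_closed W le A \<longleftrightarrow> A \<subseteq> W \<and> (\<forall>w v. w \<in> A \<longrightarrow> le w v \<longrightarrow> v \<in> A)"

definition ext_cim ::
  "'w set \<Rightarrow> ('w \<Rightarrow> 'w \<Rightarrow> bool) \<Rightarrow> ('w set \<Rightarrow> 'w \<Rightarrow> 'w \<Rightarrow> bool)
   \<Rightarrow> (nat \<Rightarrow> 'w set) \<Rightarrow> (nat \<Rightarrow> 'w set) \<Rightarrow> bool" where
  "ext_cim W le R Vp Vq \<longleftrightarrow>
     W \<noteq> {} \<and> preorder_on W le \<and>
     (\<forall>i. up_closed W le (Vp i)) \<and> (\<forall>i. up_closed W le (Vq i)) \<and>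
     (\<forall>X w v. R X w v \<longrightarrow> w \<in> W \<and> X \<subseteq> W \<and> v \<in> W) \<and>
     (\<forall>X. X \<subseteq> W \<longrightarrow>
        (\<forall>w w' v. le w w' \<longrightarrow> R X w v \<longrightarrow> (\<exists>v'. le v v' \<and> R X w' v')) \<and>
        (\<forall>w v v'. R X w v \<longrightarrow> le v v' \<longrightarrow> (\<exists>w'. le w w' \<and> R X w' v')))"

fun isat ::
  "'w set \<Rightarrow> ('w \<Rightarrow> 'w \<Rightarrow> bool) \<Rightarrow> ('w set \<Rightarrow> 'w \<Rightarrow> 'w \<Rightarrow> bool)
   \<Rightarrow> (nat \<Rightarrow> 'w set) \<Rightarrow> (nat \<Rightarrow> 'w set) \<Rightarrow> 'w \<Rightarrow> efm \<Rightarrow> bool" where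
  "isat W le R Vp Vq w (PV i) = (w \<in> Vp i)"
| "isat W le R Vp Vq w (QV i) = (w \<in> Vq i)"
| "isat W le R Vp Vq w (EConj a b) = (isat W le R Vp Vq w a \<and> isat W le R Vp Vq w b)"
| "isat W le R Vp Vq w (EDisj a b) = (isat W le R Vp Vq w a \<or> isat W le R Vp Vq w b)"
| "isat W le R Vp Vq w (EImp a b) =
     (\<forall>v. le w v \<longrightarrow> isat W le R Vp Vq v a \<longrightarrow> isat W le R Vp Vq v b)"
| "isat W le R Vp Vq w (EBox a b) =
     (\<forall>v u. le w v \<longrightarrow> R {x \<in> W. isat W le R Vp Vq x a} v u \<longrightarrow> isat W le R Vp Vq u b)"
| "isat W le R Vp Vq w (EDia a b) =
     (\<exists>u. R {x \<in> W. isat W le R Vp Vq x a} w u \<and> isat W le R Vp Vq u b)"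

text \<open>A model is (W, le, Rn, Vplus, Vminus); Rn (X,Y) w v means R_{(X,Y)}(w,v).\<close>

definition nelson_model ::
  "'w set \<Rightarrow> ('w \<Rightarrow> 'w \<Rightarrow> bool) \<Rightarrow> ('w set \<times> 'w set \<Rightarrow> 'w \<Rightarrow> 'w \<Rightarrow> bool)
   \<Rightarrow> (nat \<Rightarrow> 'w set) \<Rightarrow> (nat \<Rightarrow> 'w set) \<Rightarrow> bool" where
  "nelson_model W le R Vplus Vminus \<longleftrightarrow>
     W \<noteq> {} \<and> preorder_on W le \<and>
     (\<forall>i. up_closed W le (Vplus i)) \<and> (\<forall>i. up_closed W le (Vminus i)) \<and>
     (\<forall>X Y w v. R (X, Y) w v \<longrightarrow> w \<in> W \<and> X \<subseteq> W \<and> Y \<subseteq> W \<and> v \<in> W) \<and>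
     (\<forall>X Y. X \<subseteq> W \<longrightarrow> Y \<subseteq> W \<longrightarrow>
        (\<forall>w w' v. le w w' \<longrightarrow> R (X, Y) w v \<longrightarrow> (\<exists>v'. le v v' \<and> R (X, Y) w' v')) \<and>
        (\<forall>w v v'. R (X, Y) w v \<longrightarrow> le v v' \<longrightarrow> (\<exists>w'. le w w' \<and> R (X, Y) w' v')))"

text \<open>nsat True = verification (|=+), nsat False = falsification (|=-).\<close>

fun nsat ::
  "'w set \<Rightarrow> ('w \<Rightarrow> 'w \<Rightarrow> bool) \<Rightarrow> ('w set \<times> 'w set \<Rightarrow> 'w \<Rightarrow> 'w \<Rightarrow> bool)
   \<Rightarrow> (nat \<Rightarrow> 'w set) \<Rightarrow> (nat \<Rightarrow> 'w set) \<Rightarrow> bool \<Rightarrow> 'w \<Rightarrow> fm \<Rightarrow> bool" where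
  "nsat W le R Vplus Vminus b w (Var i) = (if b then w \<in> Vplus i else w \<in> Vminus i)"
| "nsat W le R Vplus Vminus b w (Neg a) = nsat W le R Vplus Vminus (\<not> b) w a"
| "nsat W le R Vplus Vminus b w (Conj a c) =
     (if b then nsat W le R Vplus Vminus True w a \<and> nsat W le R Vplus Vminus True w c
      else nsat W le R Vplus Vminus False w a \<or> nsat W le R Vplus Vminus False w c)"
| "nsat W le R Vplus Vminus b w (Disj a c) =
     (if b then nsat W le R Vplus Vminus True w a \<or> nsat W le R Vplus Vminus True w c
      else nsat W le R Vplus Vminus False w a \<and> nsat W le R Vplus Vminus False w c)"
| "nsat W le R Vplus Vminus b w (Imp a c) =
     (if b then (\<forall>v. le w v \<longrightarrow> nsat W le R Vplus Vminus True v a \<longrightarrow> nsat W le R Vplus Vminus True v c)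
      else nsat W le R Vplus Vminus True w a \<and> nsat W le R Vplus Vminus False w c)"
| "nsat W le R Vplus Vminus b w (Cond a c) =
     (if b then (\<forall>v u. le w v \<longrightarrow>
                   R ({x \<in> W. nsat W le R Vplus Vminus True x a},
                      {x \<in> W. nsat W le R Vplus Vminus False x a}) v u \<longrightarrow>
                   nsat W le R Vplus Vminus True u c)
      else (\<exists>u. R ({x \<in> W. nsat W le R Vplus Vminus True x a},
                    {x \<in> W. nsat W le R Vplus Vminus False x a}) w u \<and>
                nsat W le R Vplus Vminus False u c))"

text \<open>trans True phi = E^\<plusminus>(phi), trans False phi = E^\<plusminus>(~phi).\<close>

fun trans :: "bool \<Rightarrow> fm \<Rightarrow> efm" where
  "trans b (Var i) = (if b then PV i else QV i)"
| "trans b (Neg a) = trans (\<not> b) a"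
| "trans b (Conj a c) =
     (if b then EConj (trans True a) (trans True c) else EDisj (trans False a) (trans False c))"
| "trans b (Disj a c) =
     (if b then EDisj (trans True a) (trans True c) else EConj (trans False a) (trans False c))"
| "trans b (Imp a c) =
     (if b then EImp (trans True a) (trans True c) else EConj (trans True a) (trans False c))"
| "trans b (Cond a c) =
     (if b then EBox (trans True a) (EBox (trans False a) (trans True c))
      else EDia (trans True a) (EDia (trans False a) (trans False c)))"

definition Epm :: "fm \<Rightarrow> efm" where
  "Epm \<phi> = trans True \<phi>"

definition Rn4 :: "('w set \<Rightarrow> 'w \<Rightarrow> 'w \<Rightarrow> bool) \<Rightarrow> 'w set \<times> 'w set \<Rightarrow> 'w \<Rightarrow> 'w \<Rightarrow> bool" where
  "Rn4 R XY w v \<longleftrightarrow> (\<exists>u. R (fst XY) w u \<and> R (snd XY) u v)"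

end

theory Submission
  imports Defs
begin

text \<open>The relation of \<open>\<M>\<^sup>n\<^sup>4\<close> indexed by \<open>(X, Y)\<close> is the composite \<open>R\<^sub>X ;; R\<^sub>Y\<close>.
  Both frame conditions are stable under composition of relations, so \<open>\<M>\<^sup>n\<^sup>4\<close> is a
  Nelsonian model. For the truth lemma, induct on \<open>\<phi>\<close> proving the claim for verification and
  falsification simultaneously (\<open>E\<^sup>\<plusminus>(\<sim>\<phi>)\<close> is the falsification clause). The falsification
  of a conditional is an existential over a two-step path, which is literally the nested
  \<open>\<Diamond>\<rightarrow>\<close>. For the verification, the nested \<open>\<box>\<rightarrow>\<close> additionally allows a \<open>\<le>\<close>-step between
  the two \<open>R\<close>-steps; condition (c2) for the first step pushes it to the front, where it is
  absorbed by the leading \<open>\<le>\<close>-step of the conditional.\<close>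

definition forth_cond :: "('w \<Rightarrow> 'w \<Rightarrow> bool) \<Rightarrow> ('w \<Rightarrow> 'w \<Rightarrow> bool) \<Rightarrow> bool" where
  "forth_cond le S \<longleftrightarrow> (\<forall>w w' v. le w w' \<longrightarrow> S w v \<longrightarrow> (\<exists>v'. le v v' \<and> S w' v'))"

definition back_cond :: "('w \<Rightarrow> 'w \<Rightarrow> bool) \<Rightarrow> ('w \<Rightarrow> 'w \<Rightarrow> bool) \<Rightarrow> bool" where
  "back_cond le S \<longleftrightarrow> (\<forall>w v v'. S w v \<longrightarrow> le v v' \<longrightarrow> (\<exists>w'. le w w' \<and> S w' v'))"

lemma forth_relcompp:
  assumes "forth_cond le S" and "forth_cond le T"
  shows "forth_cond le (S OO T)"
  unfolding forth_cond_def
proof (intro allI impI)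
  fix w w' v
  assume "le w w'" and "(S OO T) w v"
  then obtain u where u: "S w u" "T u v" by blast
  obtain u' where u': "le u u'" "S w' u'" using assms(1) \<open>le w w'\<close> u(1) unfolding forth_cond_def by blast
  obtain v' where "le v v'" "T u' v'" using assms(2) u'(1) u(2) unfolding forth_cond_def by blast
  with u'(2) show "\<exists>v'. le v v' \<and> (S OO T) w' v'" by blast
qed

lemma back_relcompp:
  assumes "back_cond le S" and "back_cond le T"
  shows "back_cond le (S OO T)"
  unfolding back_cond_def
proof (intro allI impI)
  fix w v v'
  assume "(S OO T) w v" and "le v v'"
  then obtain u where u: "S w u" "T u v" by blast
  obtain u' where u': "le u u'" "T u' v'" using assms(2) u(2) \<open>le v v'\<close> unfolding back_cond_def by blast
  obtain w' where "le w w'" "S w' u'" using assms(1) u(1) u'(1) unfolding back_cond_def by blast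
  with u'(2) show "\<exists>w'. le w w' \<and> (S OO T) w' v'" by blast
qed

lemma preorder_on_in_carrier: "preorder_on W le \<Longrightarrow> le w v \<Longrightarrow> v \<in> W"
  unfolding preorder_on_def by blast

lemma preorder_on_refl: "preorder_on W le \<Longrightarrow> w \<in> W \<Longrightarrow> le w w"
  unfolding preorder_on_def by blast

lemma preorder_on_trans: "preorder_on W le \<Longrightarrow> le u v \<Longrightarrow> le v w \<Longrightarrow> le u w"
  unfolding preorder_on_def by blast

lemma box_relcompp_iff_nested_box:
  assumes "preorder_on W le" and "back_cond le S" and "\<And>v m. S v m \<Longrightarrow> m \<in> W"
  shows "(\<forall>v u. le w v \<longrightarrow> (S OO T) v u \<longrightarrow> P u) \<longleftrightarrow>
         (\<forall>v m. le w v \<longrightarrow> S v m \<longrightarrow> (\<forall>m' u. le m m' \<longrightarrow> T m' u \<longrightarrow> P u))"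
proof
  assume comp: "\<forall>v u. le w v \<longrightarrow> (S OO T) v u \<longrightarrow> P u"
  show "\<forall>v m. le w v \<longrightarrow> S v m \<longrightarrow> (\<forall>m' u. le m m' \<longrightarrow> T m' u \<longrightarrow> P u)"
  proof (intro allI impI)
    fix v m m' u
    assume "le w v" "S v m" "le m m'" "T m' u"
    obtain v' where "le v v'" "S v' m'"
      using assms(2) \<open>S v m\<close> \<open>le m m'\<close> unfolding back_cond_def by blast
    moreover have "le w v'" using assms(1) \<open>le w v\<close> \<open>le v v'\<close> by (rule preorder_on_trans)
    ultimately show "P u" using comp \<open>T m' u\<close> by blast
  qed
next
  assume "\<forall>v m. le w v \<longrightarrow> S v m \<longrightarrow> (\<forall>m' u. le m m' \<longrightarrow> T m' u \<longrightarrow> P u)"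
  then show "\<forall>v u. le w v \<longrightarrow> (S OO T) v u \<longrightarrow> P u"
    using preorder_on_refl[OF assms(1) assms(3)] by blast
qed

lemma Rn4_eq_relcompp: "Rn4 R (X, Y) = R X OO R Y"
  unfolding Rn4_def by auto

context
  fixes W le R Vp Vq
  assumes model: "ext_cim W le R Vp Vq"
begin

lemma ext_cim_preorder_on: "preorder_on W le"
  using model unfolding ext_cim_def by (elim conjE)

lemma ext_cim_rel_in_carrier:
  assumes "R X w v"
  shows "w \<in> W \<and> X \<subseteq> W \<and> v \<in> W"
proof -
  have "\<forall>X w v. R X w v \<longrightarrow> w \<in> W \<and> X \<subseteq> W \<and> v \<in> W"
    using model unfolding ext_cim_def by (elim conjE)
  with assms show ?thesis by blast
qed

text \<open>Frame conditions are only required for \<open>X \<subseteq> W\<close>; for other \<open>X\<close> the relation \<open>R\<^sub>X\<close> is empty.\<close>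

lemma ext_cim_forth_back: "forth_cond le (R X) \<and> back_cond le (R X)"
proof (cases "X \<subseteq> W")
  case True
  have "\<forall>X. X \<subseteq> W \<longrightarrow> forth_cond le (R X) \<and> back_cond le (R X)"
    using model unfolding ext_cim_def forth_cond_def back_cond_def by (elim conjE)
  with True show ?thesis by blast
next
  case False
  then have "\<not> R X w v" for w v
    using ext_cim_rel_in_carrier by blast
  then show ?thesis
    unfolding forth_cond_def back_cond_def by blast
qed

lemma nelson_model_Rn4: "nelson_model W le (Rn4 R) Vp Vq"
proof -
  have base: "W \<noteq> {} \<and> preorder_on W le \<and> (\<forall>i. up_closed W le (Vp i)) \<and> (\<forall>i. up_closed W le (Vq i))"
    using model unfolding ext_cim_def by (elim conjE) (intro conjI)
  have carrier: "w \<in> W \<and> X \<subseteq> W \<and> Y \<subseteq> W \<and> v \<in> W" if "Rn4 R (X, Y) w v" for X Y w v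
  proof -
    from that obtain u where "R X w u" "R Y u v"
      unfolding Rn4_def by auto
    with ext_cim_rel_in_carrier show ?thesis by blast
  qed
  have "forth_cond le (Rn4 R (X, Y))" "back_cond le (Rn4 R (X, Y))" for X Y
    unfolding Rn4_eq_relcompp by (simp_all add: ext_cim_forth_back forth_relcompp back_relcompp)
  with base carrier show ?thesis
    unfolding nelson_model_def forth_cond_def back_cond_def by simp
qed

lemma nsat_Rn4_iff_isat_trans:
  assumes "w \<in> W"
  shows "nsat W le (Rn4 R) Vp Vq b w \<phi> \<longleftrightarrow> isat W le R Vp Vq w (trans b \<phi>)"
  using assms
proof (induction \<phi> arbitrary: b w)
  case (Imp a c)
  have "le w v \<Longrightarrow> v \<in> W" for v
    using ext_cim_preorder_on by (rule preorder_on_in_carrier)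
  with Imp show ?case by (cases b) auto
next
  case (Cond a c)
  define A where "A = {x \<in> W. isat W le R Vp Vq x (trans True a)}"
  define B where "B = {x \<in> W. isat W le R Vp Vq x (trans False a)}"
  have ext: "{x \<in> W. nsat W le (Rn4 R) Vp Vq True x a} = A"
            "{x \<in> W. nsat W le (Rn4 R) Vp Vq False x a} = B"
    unfolding A_def B_def by (auto simp: Cond.IH(1))
  have consequent: "nsat W le (Rn4 R) Vp Vq b' u c \<longleftrightarrow> isat W le R Vp Vq u (trans b' c)"
    if "(R A OO R B) v u" for v u b'
  proof -
    from that obtain m where "R B m u" by blast
    then have "u \<in> W" by (simp add: ext_cim_rel_in_carrier)
    then show ?thesis by (rule Cond.IH(2))
  qed
  show ?case
  proof (cases b)
    case True
    have "nsat W le (Rn4 R) Vp Vq b w (Cond a c) \<longleftrightarrow>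
          (\<forall>v u. le w v \<longrightarrow> (R A OO R B) v u \<longrightarrow> nsat W le (Rn4 R) Vp Vq True u c)"
      using True by (simp add: ext Rn4_eq_relcompp)
    also have "\<dots> \<longleftrightarrow>
          (\<forall>v u. le w v \<longrightarrow> (R A OO R B) v u \<longrightarrow> isat W le R Vp Vq u (trans True c))"
      by (simp add: consequent cong: conj_cong)
    also have "\<dots> \<longleftrightarrow> (\<forall>v m. le w v \<longrightarrow> R A v m \<longrightarrow>
                        (\<forall>m' u. le m m' \<longrightarrow> R B m' u \<longrightarrow> isat W le R Vp Vq u (trans True c)))"
      by (rule box_relcompp_iff_nested_box[OF ext_cim_preorder_on ext_cim_forth_back[THEN conjunct2]])
        (blast dest: ext_cim_rel_in_carrier)
    also have "\<dots> \<longleftrightarrow> isat W le R Vp Vq w (trans b (Cond a c))"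
      using True by (simp add: A_def B_def)
    finally show ?thesis .
  next
    case False
    have "nsat W le (Rn4 R) Vp Vq b w (Cond a c) \<longleftrightarrow>
          (\<exists>u. (R A OO R B) w u \<and> nsat W le (Rn4 R) Vp Vq False u c)"
      using False by (simp add: ext Rn4_eq_relcompp)
    also have "\<dots> \<longleftrightarrow> (\<exists>u. (R A OO R B) w u \<and> isat W le R Vp Vq u (trans False c))"
      by (simp add: consequent cong: conj_cong)
    also have "\<dots> \<longleftrightarrow> isat W le R Vp Vq w (trans b (Cond a c))"
      using False by (auto simp: A_def B_def relcompp_apply)
    finally show ?thesis .
  qed
qed simp_all

end

theorem lemma14:
  assumes "ext_cim W le R Vp Vq"
  shows "nelson_model W le (Rn4 R) Vp Vq \<and>
         (\<forall>w \<in> W. \<forall>\<phi>. nsat W le (Rn4 R) Vp Vq True w \<phi> \<longleftrightarrow> isat W le R Vp Vq w (Epm \<phi>))"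
  using nelson_model_Rn4[OF assms] nsat_Rn4_iff_isat_trans[OF assms]
  unfolding Epm_def by blast

end
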